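(* Let $\zeta_5$ be a primitive $5$-th root of unity. (1) $\left\{\mathcal{S}_{\frac{r}{s}}(\zeta_5) : \tfrac{r}{s}>0\right\}=\{0,\ c,\ (1+\zeta_5)c,\ (1-\zeta_5^2)c : c=\pm\zeta_5^j,\ j=0,1,\dots,4\}$. (2) For coprime positive integers $r,s$, $\mathcal{S}_{\frac{r}{s}}(\zeta_5)=0$ if and only if $s\in 5\mathbb{Z}$ and $r\equiv 1$ or $4 \pmod 5$.
   Context: Let $q$ be a formal parameter, $R_q=\begin{pmatrix} q & 1\\ 0 & 1\end{pmatrix}$, $S_q=\begin{pmatrix} 0 & -q^{-1}\\ 1 & 0\end{pmatrix}$, and for integers $c_1,\dots,c_k$ put $M_q(c_1,\dots,c_k)=R_q^{c_1}S_qR_q^{c_2}S_q\cdots R_q^{c_k}S_q$. Every irreducible fraction $\frac{r}{s}>1$ ($r,s$ positive coprime integers) has a unique negative (Hirzebruch–Jung) continued fraction expansion $\frac{r}{s}=c_1-\cfrac{1}{c_2-\cfrac{1}{\ddots-\cfrac{1}{c_k}}}$ with all $c_i\ge 2$; for such $\frac rs$ define polynomials $\mathcal{R}_{\frac rs}(q),\mathcal{S}_{\frac rs}(q)$ as the first column of $M_q(c_1,\dots,c_k)$, i.e. $M_q(c_1,\dots,c_k)=\begin{pmatrix}\mathcal{R}_{\frac rs}(q) & *\\ \mathcal{S}_{\frac rs}(q) & *\end{pmatrix}$. For an arbitrary rational number $x=\frac rs$ (in lowest terms, $s>0$), define $\mathcal{S}_x(q):=\mathcal{S}_{x+m}(q)$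 for any integer $m$ with $x+m>1$ (this is independent of $m$); equivalently $\mathcal{S}_x$ is the denominator, normalized to lie in $\mathbb{Z}[q]$ with constant term $1$, of the $q$-deformed rational $[x]_q$ defined by $[x]_q=\mathcal{R}_x/\mathcal{S}_x$ for $x>1$ and $[x+1]_q=q[x]_q+1$. *)

theory Defs
  imports Complex_Main
begin

text \<open>2x2 matrices as quadruples (a,b,c,d) = [[a,b],[c,d]].\<close>
type_synonym mat2 = "complex \<times> complex \<times> complex \<times> complex"

definition mmul :: "mat2 \<Rightarrow> mat2 \<Rightarrow> mat2" where
  "mmul A B = (case A of (a,b,c,d) \<Rightarrow> case B of (e,f,g,h) \<Rightarrow>
      (a*e + b*g, a*f + b*h, c*e + d*g, c*f + d*h))"

definition mid :: mat2 where "mid = (1,0,0,1)"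

fun mpow :: "mat2 \<Rightarrow> nat \<Rightarrow> mat2" where
  "mpow A 0 = mid"
| "mpow A (Suc n) = mmul A (mpow A n)"

definition Rq :: "complex \<Rightarrow> mat2" where "Rq q = (q, 1, 0, 1)"
definition Sq :: "complex \<Rightarrow> mat2" where "Sq q = (0, - inverse q, 1, 0)"

fun Mq :: "complex \<Rightarrow> int list \<Rightarrow> mat2" where
  "Mq q [] = mid"
| "Mq q (c # cs) = mmul (mmul (mpow (Rq q) (nat c)) (Sq q)) (Mq q cs)"

fun hj_val :: "int list \<Rightarrow> rat" where
  "hj_val [] = 0"
| "hj_val [c] = of_int c"
| "hj_val (c # cs) = of_int c - 1 / hj_val cs"

definition hj_expansion :: "rat \<Rightarrow> int list" where
  "hj_expansion x = (THE cs. cs \<noteq> [] \<and> (\<forall>c\<in>set cs. c \<ge> 2) \<and> hj_val cs = x)"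

text \<open>S_x(q) for x > 1: lower-left entry (first column, second row) of M_q.\<close>
definition S_gt1 :: "complex \<Rightarrow> rat \<Rightarrow> complex" where
  "S_gt1 q x = fst (snd (snd (Mq q (hj_expansion x))))"

text \<open>S_x(q) for arbitrary rational x: S_{x+m} with x+m > 1; we take m = 2 - floor x.\<close>
definition S_rat :: "complex \<Rightarrow> rat \<Rightarrow> complex" where
  "S_rat q x = S_gt1 q (x + of_int (2 - \<lfloor>x\<rfloor>))"

end

theory Submission
  imports Defs
begin

(*
  Modulo the unit scalars \<plusminus>\<zeta>^j, the matrices R_\<zeta> and S_\<zeta> act on first columns exactly as
  [[1,1],[0,1]] and [[0,-1],[1,0]] act on (Z/5)^2: since R_\<zeta>^5 = 1 and S_\<zeta>^2 is a unit scalar,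
  the image of the modular group is PSL_2(F_5). Hence the first column (R_{r/s}(\<zeta>), S_{r/s}(\<zeta>))
  of M_\<zeta> is a unit times a vector depending only on (r mod 5, s mod 5). This is checked by a
  finite computation in Z[\<zeta>] on a table of 25 vectors, whose second entries are 0 exactly
  for s \<equiv> 0, r \<equiv> \<plusminus>1 and are unit multiples of 1, 1 + \<zeta> or 1 - \<zeta>^2 otherwise.
  Conversely every such value occurs, because prepending 3, 5 to a continued fraction multiplies
  S by -\<zeta>^4, which generates the ten units.
*)

datatype cyc5 = Cyc5 int int int int int

fun cyc5_eval :: "complex \<Rightarrow> cyc5 \<Rightarrow> complex" where
  "cyc5_eval z (Cyc5 a b c d e) = of_int a + of_int b * z + of_int c * z^2 + of_int d * z^3 + of_int e * z^4"

fun cyc5_add :: "cyc5 \<Rightarrow> cyc5 \<Rightarrow> cyc5" where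
  "cyc5_add (Cyc5 a b c d e) (Cyc5 a' b' c' d' e') = Cyc5 (a+a') (b+b') (c+c') (d+d') (e+e')"

fun cyc5_scale :: "int \<Rightarrow> cyc5 \<Rightarrow> cyc5" where
  "cyc5_scale k (Cyc5 a b c d e) = Cyc5 (k*a) (k*b) (k*c) (k*d) (k*e)"

fun cyc5_rot :: "cyc5 \<Rightarrow> cyc5" where
  "cyc5_rot (Cyc5 a b c d e) = Cyc5 e a b c d"

(* A sound test for equality in Z[\<zeta>]: the difference is a multiple of 1 + \<zeta> + ... + \<zeta>^4. *)
fun cyc5_eq :: "cyc5 \<Rightarrow> cyc5 \<Rightarrow> bool" where
  "cyc5_eq (Cyc5 a b c d e) (Cyc5 a' b' c' d' e') \<longleftrightarrow>
     a - a' = b - b' \<and> b - b' = c - c' \<and> c - c' = d - d' \<and> d - d' = e - e'"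

definition cyc5_unit :: "int \<times> nat \<Rightarrow> cyc5 \<Rightarrow> cyc5" where
  "cyc5_unit u p = cyc5_scale (fst u) ((cyc5_rot ^^ snd u) p)"

lemma cyc5_eval_add [simp]: "cyc5_eval z (cyc5_add p q) = cyc5_eval z p + cyc5_eval z q"
  by (cases p; cases q) (simp add: algebra_simps)

lemma cyc5_eval_scale [simp]: "cyc5_eval z (cyc5_scale k p) = of_int k * cyc5_eval z p"
  by (cases p) (simp add: algebra_simps)

definition unit_codes :: "(int \<times> nat) list" where
  "unit_codes = List.product [1, -1] [0..<5]"

definition col_Rq :: "cyc5 \<times> cyc5 \<Rightarrow> cyc5 \<times> cyc5" where
  "col_Rq v = (cyc5_add (cyc5_rot (fst v)) (snd v), snd v)"

definition col_Sq :: "cyc5 \<times> cyc5 \<Rightarrow> cyc5 \<times> cyc5" where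
  "col_Sq v = (cyc5_scale (-1) ((cyc5_rot ^^ 4) (snd v)), fst v)"

definition unit_related :: "cyc5 \<times> cyc5 \<Rightarrow> cyc5 \<times> cyc5 \<Rightarrow> bool" where
  "unit_related v w \<longleftrightarrow> (\<exists>u \<in> set unit_codes.
     cyc5_eq (fst v) (cyc5_unit u (fst w)) \<and> cyc5_eq (snd v) (cyc5_unit u (snd w)))"

(*
  Entry 5 a + b is, up to a unit, the first column of M_\<zeta>(cs) for every continued fraction cs
  with numerator \<equiv> a and denominator \<equiv> b (mod 5). The entry for (0, 0) never occurs.
*)
definition class_table :: "(cyc5 \<times> cyc5) list" where
 "class_table = [(Cyc5 0 0 0 0 0, Cyc5 0 0 0 0 0),
  (Cyc5 0 0 0 0 0, Cyc5 1 0 0 0 0),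
  (Cyc5 1 2 1 1 0, Cyc5 1 1 0 0 0),
  (Cyc5 1 1 2 1 0, Cyc5 1 1 1 0 0),
  (Cyc5 3 3 3 3 3, Cyc5 1 1 1 1 0),
  (Cyc5 1 0 0 0 0, Cyc5 0 0 0 0 0),
  (Cyc5 1 0 0 0 0, Cyc5 1 0 0 0 0),
  (Cyc5 0 1 0 0 0, Cyc5 1 1 0 0 0),
  (Cyc5 2 2 3 2 2, Cyc5 1 1 1 0 0),
  (Cyc5 2 2 2 3 2, Cyc5 1 1 1 1 0),
  (Cyc5 (-1) (-1) 0 0 (-1), Cyc5 1 1 2 1 0),
  (Cyc5 1 1 0 0 0, Cyc5 1 0 0 0 0),
  (Cyc5 1 2 2 1 1, Cyc5 1 1 0 0 0),
  (Cyc5 0 1 1 0 0, Cyc5 1 1 1 0 0),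
  (Cyc5 1 1 2 2 1, Cyc5 1 1 1 1 0),
  (Cyc5 (-1) 0 0 0 (-1), Cyc5 1 2 1 1 0),
  (Cyc5 1 1 1 0 0, Cyc5 1 0 0 0 0),
  (Cyc5 1 1 1 0 0, Cyc5 1 1 0 0 0),
  (Cyc5 1 2 2 2 1, Cyc5 1 1 1 0 0),
  (Cyc5 0 1 1 1 0, Cyc5 1 1 1 1 0),
  (Cyc5 0 0 0 0 (-1), Cyc5 0 0 0 0 0),
  (Cyc5 1 1 1 1 0, Cyc5 1 0 0 0 0),
  (Cyc5 0 0 0 0 (-1), Cyc5 1 1 0 0 0),
  (Cyc5 0 0 0 0 (-1), Cyc5 1 1 1 0 0),
  (Cyc5 0 0 0 0 (-1), Cyc5 1 1 1 1 0)]"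

definition class_col :: "int \<times> int \<Rightarrow> cyc5 \<times> cyc5" where
  "class_col rs = class_table ! nat (5 * (fst rs mod 5) + snd rs mod 5)"

lemma class_col_mod [simp]: "class_col (r mod 5, s mod 5) = class_col (r, s)"
  by (simp add: class_col_def)

lemma list_all_mod_5: "list_all P [0..4] \<Longrightarrow> P (x mod 5)"
  for x :: int
  by (simp add: list_all_iff)

lemma class_col_Rq_check:
  "list_all (\<lambda>a. list_all (\<lambda>b. unit_related (col_Rq (class_col (a, b))) (class_col (a + b, b))) [0..4]) [0..4]"
  by code_simp

lemma class_col_Sq_check:
  "list_all (\<lambda>a. list_all (\<lambda>b. unit_related (col_Sq (class_col (a, b))) (class_col (- b, a))) [0..4]) [0..4]"
  by code_simp

lemma class_col_snd_check:
  "list_all (\<lambda>a. list_all (\<lambda>b. (a, b) \<noteq> (0, 0) \<longrightarrow>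
     (if b = 0 \<and> (a = 1 \<or> a = 4) then cyc5_eq (snd (class_col (a, b))) (Cyc5 0 0 0 0 0)
      else (\<exists>t \<in> set [Cyc5 1 0 0 0 0, Cyc5 1 1 0 0 0, Cyc5 1 0 (-1) 0 0]. \<exists>u \<in> set unit_codes.
              cyc5_eq (snd (class_col (a, b))) (cyc5_unit u t)))) [0..4]) [0..4]"
  by code_simp

definition mat_apply :: "mat2 \<Rightarrow> complex \<times> complex \<Rightarrow> complex \<times> complex" where
  "mat_apply A v = (case A of (a, b, c, d) \<Rightarrow> case v of (x, y) \<Rightarrow> (a*x + b*y, c*x + d*y))"

definition col1 :: "mat2 \<Rightarrow> complex \<times> complex" where
  "col1 A = mat_apply A (1, 0)"

definition scale_col :: "complex \<Rightarrow> complex \<times> complex \<Rightarrow> complex \<times> complex" where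
  "scale_col u v = (u * fst v, u * snd v)"

lemma mat_apply_mmul: "mat_apply (mmul A B) v = mat_apply A (mat_apply B v)"
  by (cases A; cases B; cases v) (simp add: mat_apply_def mmul_def algebra_simps)

lemma mat_apply_mid [simp]: "mat_apply mid v = v"
  by (cases v) (simp add: mat_apply_def mid_def)

lemma mat_apply_mpow: "mat_apply (mpow A n) v = (mat_apply A ^^ n) v"
  by (induction n arbitrary: v) (simp_all add: mat_apply_mmul)

lemma mat_apply_scale_col: "mat_apply A (scale_col u v) = scale_col u (mat_apply A v)"
  by (cases A; cases v) (simp add: mat_apply_def scale_col_def algebra_simps)

lemma scale_col_scale_col [simp]: "scale_col u (scale_col w v) = scale_col (u * w) v"
  by (simp add: scale_col_def)

lemma scale_col_1 [simp]: "scale_col 1 v = v"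
  by (simp add: scale_col_def)

lemma mat_apply_Sq [simp]: "mat_apply (Sq q) (x, y) = (- inverse q * y, x)"
  by (simp add: mat_apply_def Sq_def)

lemma mat_apply_Rq_iter: "(mat_apply (Rq q) ^^ n) (x, y) = (q^n * x + (\<Sum>i<n. q^i) * y, y)"
proof (induction n)
  case (Suc n)
  have "(\<Sum>i<Suc n. q^i) = 1 + q * (\<Sum>i<n. q^i)"
    by (subst sum.lessThan_Suc_shift) (simp add: sum_distrib_left)
  with Suc show ?case
    by (simp add: mat_apply_def Rq_def algebra_simps)
qed simp

lemma col1_mid [simp]: "col1 mid = (1, 0)"
  by (simp add: col1_def mat_apply_def mid_def)

lemma col1_Mq_Cons:
  "col1 (Mq q (c # cs)) = (mat_apply (Rq q) ^^ nat c) (mat_apply (Sq q) (col1 (Mq q cs)))"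
  by (simp add: col1_def mat_apply_mmul mat_apply_mpow)

lemma col1_Mq_Nil [simp]: "col1 (Mq q []) = (1, 0)"
  by simp

lemma fst_col1_Mq_Cons:
  "fst (col1 (Mq q (c # cs))) =
     (\<Sum>i<nat c. q^i) * fst (col1 (Mq q cs)) - q ^ nat c * inverse q * snd (col1 (Mq q cs))"
  unfolding col1_Mq_Cons by (cases "col1 (Mq q cs)") (simp add: mat_apply_Rq_iter)

lemma snd_col1_Mq_Cons: "snd (col1 (Mq q (c # cs))) = fst (col1 (Mq q cs))"
  unfolding col1_Mq_Cons by (cases "col1 (Mq q cs)") (simp add: mat_apply_Rq_iter)

definition hj_admissible :: "int list \<Rightarrow> bool" where
  "hj_admissible cs \<longleftrightarrow> cs \<noteq> [] \<and> (\<forall>c\<in>set cs. 2 \<le> c)"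

(* The first column of M_1(cs), i.e. numerator and denominator of hj_val cs. *)
fun hj_fraction :: "int list \<Rightarrow> int \<times> int" where
  "hj_fraction [] = (1, 0)"
| "hj_fraction (c # cs) = (case hj_fraction cs of (r, s) \<Rightarrow> (c * r - s, r))"

lemma hj_admissible_Cons:
  "hj_admissible (c # cs) \<longleftrightarrow> 2 \<le> c \<and> (cs = [] \<or> hj_admissible cs)"
  by (auto simp: hj_admissible_def)

lemma hj_val_Cons: "cs \<noteq> [] \<Longrightarrow> hj_val (c # cs) = of_int c - 1 / hj_val cs"
  by (cases cs) auto

lemma hj_fraction_hj_val:
  assumes "hj_admissible cs" and "hj_fraction cs = (r, s)"
  shows "0 < s \<and> s < r \<and> hj_val cs = of_int r / of_int s"
  using assms
proof (induction cs arbitrary: r s)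
  case (Cons c cs)
  show ?case
  proof (cases "cs = []")
    case True
    with Cons.prems show ?thesis by (auto simp: hj_admissible_Cons)
  next
    case False
    obtain r' s' where rs': "hj_fraction cs = (r', s')" by fastforce
    with Cons False have IH: "0 < s'" "s' < r'" "hj_val cs = of_int r' / of_int s'"
      by (auto simp: hj_admissible_Cons)
    have rs: "r = c * r' - s'" "s = r'" and "2 \<le> c"
      using Cons.prems rs' by (auto simp: hj_admissible_Cons)
    have "2 * r' \<le> c * r'"
      using \<open>2 \<le> c\<close> IH by (intro mult_right_mono) auto
    then have "r' < c * r' - s'" using IH by linarith
    moreover have "hj_val (c # cs) = of_int (c * r' - s') / of_int r'"
      unfolding hj_val_Cons[OF False] IH(3) using IH by (simp add: field_simps)
    ultimately show ?thesis using IH rs by auto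
  qed
qed (simp add: hj_admissible_def)

lemma hj_val_Cons_bounds:
  assumes "hj_admissible (c # cs)" and "cs \<noteq> []"
  shows "of_int c - 1 < hj_val (c # cs)" and "hj_val (c # cs) < of_int c"
proof -
  obtain r s where "hj_fraction cs = (r, s)" by fastforce
  with assms have "1 < hj_val cs"
    using hj_fraction_hj_val[of cs r s] by (simp add: hj_admissible_Cons)
  then show "of_int c - 1 < hj_val (c # cs)" "hj_val (c # cs) < of_int c"
    using assms(2) by (simp_all add: hj_val_Cons)
qed

lemma hj_val_ceiling: "hj_admissible (c # cs) \<Longrightarrow> \<lceil>hj_val (c # cs)\<rceil> = c"
  using hj_val_Cons_bounds[of c cs] by (cases "cs = []") (auto simp: ceiling_eq_iff)

lemma hj_val_inj:
  "hj_admissible cs \<Longrightarrow> hj_admissible ds \<Longrightarrow> hj_val cs = hj_val ds \<Longrightarrow> cs = ds"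
proof (induction cs arbitrary: ds)
  case (Cons c cs)
  obtain d ds' where ds: "ds = d # ds'"
    using Cons.prems(2) by (cases ds) (auto simp: hj_admissible_def)
  have "c = d" using hj_val_ceiling Cons.prems ds by metis
  consider "cs = []" "ds' = []" | "cs \<noteq> []" "ds' \<noteq> []" | "(cs = []) \<noteq> (ds' = [])" by blast
  then show ?case
  proof cases
    case 2
    then have "hj_val cs = hj_val ds'"
      using Cons.prems(3) \<open>c = d\<close> ds by (simp add: hj_val_Cons)
    then show ?thesis
      using Cons 2 \<open>c = d\<close> ds by (simp add: hj_admissible_Cons)
  next
    case 3
    then show ?thesis
      using Cons.prems hj_val_Cons_bounds[of c cs] hj_val_Cons_bounds[of d ds'] \<open>c = d\<close> ds
      by (cases "cs = []") auto
  qed (use \<open>c = d\<close> ds in simp)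
qed (simp add: hj_admissible_def)

lemma hj_expansion_hj_val: "hj_admissible cs \<Longrightarrow> hj_expansion (hj_val cs) = cs"
  unfolding hj_expansion_def
  by (rule the_equality) (use hj_val_inj in \<open>auto simp: hj_admissible_def\<close>)

lemma hj_fraction_surj:
  fixes r s :: int
  assumes "0 < s" and "s < r" and "coprime r s"
  shows "\<exists>cs. hj_admissible cs \<and> hj_fraction cs = (r, s)"
  using assms
proof (induction "nat s" arbitrary: r s rule: less_induct)
  case less
  show ?case
  proof (cases "s = 1")
    case True
    with less.prems show ?thesis
      by (intro exI[of _ "[r]"]) (simp add: hj_admissible_def)
  next
    case False
    define c where "c = r div s + 1"
    define s' where "s' = c * s - r"
    have "\<not> s dvd r"
      using less.prems False by auto
    then have "0 < r mod s" and "r mod s < s"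
      using less.prems(1) by (simp_all add: order_le_neq_trans dvd_eq_mod_eq_0)
    moreover have "s' = s - r mod s"
      unfolding s'_def c_def by (simp add: algebra_simps minus_div_mult_eq_mod [symmetric])
    ultimately have "0 < s'" "s' < s" by simp_all
    moreover have "coprime s s'"
      using less.prems(3) unfolding s'_def
      by (metis coprime_iff_gcd_eq_1 gcd_add_mult diff_conv_add_uminus add.commute
          coprime_minus_right_iff coprime_commute)
    ultimately obtain cs where cs: "hj_admissible cs" "hj_fraction cs = (s, s')"
      using less.hyps[of "nat s'"] less.prems(1) by auto
    have "2 \<le> c"
      using less.prems(1,2) zdiv_mono1[of s r s] unfolding c_def by simp
    with cs show ?thesis
      by (intro exI[of _ "c # cs"]) (simp add: hj_admissible_Cons s'_def)
  qed
qed

lemma S_gt1_hj_val: "hj_admissible cs \<Longrightarrow> S_gt1 q (hj_val cs) = snd (col1 (Mq q cs))"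
  by (cases "Mq q cs") (simp add: S_gt1_def hj_expansion_hj_val col1_def mat_apply_def)

lemma S_rat_of_int_fraction:
  assumes "0 < s"
  shows "S_rat q (of_int r / of_int s) = S_gt1 q (of_int (r + (2 - r div s) * s) / of_int s)"
proof -
  have "\<lfloor>(of_int r / of_int s :: rat)\<rfloor> = r div s"
    by (rule floor_divide_of_int_eq)
  with assms show ?thesis
    by (simp add: S_rat_def field_simps)
qed

lemma S_rat_hj_val_3:
  assumes "hj_admissible cs"
  shows "S_rat q (hj_val (3 # cs)) = snd (col1 (Mq q (3 # cs)))"
proof -
  have "\<lfloor>hj_val (3 # cs)\<rfloor> = 2"
    using hj_val_Cons_bounds[of 3 cs] assms by (simp add: hj_admissible_Cons floor_eq_iff hj_admissible_def)
  with assms show ?thesis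
    by (simp add: S_rat_def S_gt1_hj_val hj_admissible_Cons)
qed

locale primitive_fifth_root =
  fixes \<zeta> :: complex
  assumes power5: "\<zeta> ^ 5 = 1" and neq_1: "\<zeta> \<noteq> 1"
begin

lemma sum_powers: "1 + \<zeta> + \<zeta>^2 + \<zeta>^3 + \<zeta>^4 = 0"
proof -
  have "(1 - \<zeta>) * (1 + \<zeta> + \<zeta>^2 + \<zeta>^3 + \<zeta>^4) = 1 - \<zeta>^5"
    by (simp add: algebra_simps power_numeral_reduce)
  with power5 neq_1 show ?thesis by simp
qed

lemma sum_lessThan_5: "(\<Sum>i<5. \<zeta>^i) = 0"
  using sum_powers by (simp add: eval_nat_numeral algebra_simps)

lemma neq_0: "\<zeta> \<noteq> 0"
  using power5 by auto

lemma power_mod_5: "\<zeta> ^ n = \<zeta> ^ (n mod 5)"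
  by (metis div_mult_mod_eq power_add power_mult power5 power_one mult_1 mult.commute)

lemma inverse_eq: "inverse \<zeta> = \<zeta> ^ 4"
  using power5 by (intro inverse_unique) (simp add: power_numeral_reduce)

lemma square_neq_1: "\<zeta> ^ 2 \<noteq> 1"
proof
  assume "\<zeta> ^ 2 = 1"
  then have "\<zeta> ^ 5 = \<zeta>" by (simp add: power_numeral_reduce)
  with power5 neq_1 show False by simp
qed

lemma cyc5_eval_rot [simp]: "cyc5_eval \<zeta> (cyc5_rot p) = \<zeta> * cyc5_eval \<zeta> p"
proof (cases p)
  case (Cyc5 a b c d e)
  have "\<zeta> * \<zeta>^4 = 1" using power5 by (simp add: power_numeral_reduce)
  with Cyc5 show ?thesis by (simp add: algebra_simps power_numeral_reduce)
qed

lemma cyc5_eval_rot_iter [simp]: "cyc5_eval \<zeta> ((cyc5_rot ^^ n) p) = \<zeta> ^ n * cyc5_eval \<zeta> p"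
  by (induction n) simp_all

lemma cyc5_eval_eq:
  assumes "cyc5_eq p q"
  shows "cyc5_eval \<zeta> p = cyc5_eval \<zeta> q"
proof (cases p; cases q)
  fix a b c d e a' b' c' d' e'
  assume p: "p = Cyc5 a b c d e" and q: "q = Cyc5 a' b' c' d' e'"
  define t where "t = a - a'"
  with assms p q have "a = a' + t" "b = b' + t" "c = c' + t" "d = d' + t" "e = e' + t"
    by auto
  then have "cyc5_eval \<zeta> p - cyc5_eval \<zeta> q = of_int t * (1 + \<zeta> + \<zeta>^2 + \<zeta>^3 + \<zeta>^4)"
    unfolding p q by (simp add: algebra_simps)
  with sum_powers show ?thesis by simp
qed

definition units5 :: "complex set" where
  "units5 = {\<sigma> * \<zeta> ^ j | \<sigma> j. \<sigma> \<in> {1, -1} \<and> j < (5::nat)}"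

lemma sign_power_in_units5: "\<sigma> \<in> {1, -1} \<Longrightarrow> \<sigma> * \<zeta> ^ n \<in> units5"
  unfolding units5_def using power_mod_5[of n]
  by (intro CollectI exI[of _ \<sigma>] exI[of _ "n mod 5"]) auto

lemma one_in_units5: "1 \<in> units5"
  using sign_power_in_units5[of 1 0] by simp

lemma units5_mult:
  assumes "u \<in> units5" and "w \<in> units5"
  shows "u * w \<in> units5"
proof -
  obtain \<sigma> \<tau> i j where "u = \<sigma> * \<zeta> ^ i" "w = \<tau> * \<zeta> ^ j" "\<sigma> \<in> {1, -1}" "\<tau> \<in> {1, -1}"
    using assms unfolding units5_def by blast
  moreover from this have "\<sigma> * \<tau> \<in> {1, -1}" by auto
  ultimately show ?thesis
    using sign_power_in_units5[of "\<sigma> * \<tau>" "i + j"] by (simp add: power_add ac_simps)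
qed

lemma units5_nonzero: "u \<in> units5 \<Longrightarrow> u \<noteq> 0"
  using neq_0 by (auto simp: units5_def)

lemma cyc5_eval_unit:
  assumes "u \<in> set unit_codes"
  obtains w where "w \<in> units5" and "\<And>p. cyc5_eval \<zeta> (cyc5_unit u p) = w * cyc5_eval \<zeta> p"
proof
  show "of_int (fst u) * \<zeta> ^ snd u \<in> units5"
    using assms by (intro sign_power_in_units5) (auto simp: unit_codes_def)
qed (simp add: cyc5_unit_def)

definition col_eval :: "cyc5 \<times> cyc5 \<Rightarrow> complex \<times> complex" where
  "col_eval v = (cyc5_eval \<zeta> (fst v), cyc5_eval \<zeta> (snd v))"

lemma unit_related_col_eval:
  assumes "unit_related v w"
  obtains u where "u \<in> units5" and "col_eval v = scale_col u (col_eval w)"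
proof -
  obtain c where "c \<in> set unit_codes"
    and "cyc5_eq (fst v) (cyc5_unit c (fst w))" "cyc5_eq (snd v) (cyc5_unit c (snd w))"
    using assms unfolding unit_related_def by blast
  moreover obtain u where "u \<in> units5" and "\<And>p. cyc5_eval \<zeta> (cyc5_unit c p) = u * cyc5_eval \<zeta> p"
    using cyc5_eval_unit[OF \<open>c \<in> set unit_codes\<close>] by blast
  ultimately show ?thesis
    using that[of u] by (simp add: col_eval_def scale_col_def cyc5_eval_eq)
qed

lemma col_eval_col_Rq: "col_eval (col_Rq v) = mat_apply (Rq \<zeta>) (col_eval v)"
  by (simp add: col_eval_def col_Rq_def mat_apply_def Rq_def)

lemma col_eval_col_Sq: "col_eval (col_Sq v) = mat_apply (Sq \<zeta>) (col_eval v)"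
  by (simp add: col_eval_def col_Sq_def mat_apply_def Sq_def inverse_eq)

definition col_class :: "complex \<times> complex \<Rightarrow> int \<times> int \<Rightarrow> bool" where
  "col_class v rs \<longleftrightarrow> (\<exists>u\<in>units5. v = scale_col u (col_eval (class_col rs)))"

lemma col_class_mat_apply:
  assumes "col_class v rs"
    and "\<And>w. col_eval (F w) = mat_apply A (col_eval w)"
    and "unit_related (F (class_col rs)) (class_col rs')"
  shows "col_class (mat_apply A v) rs'"
proof -
  obtain u where u: "u \<in> units5" "v = scale_col u (col_eval (class_col rs))"
    using assms(1) unfolding col_class_def by blast
  obtain w where w: "w \<in> units5"
    "mat_apply A (col_eval (class_col rs)) = scale_col w (col_eval (class_col rs'))"
    using unit_related_col_eval[OF assms(3)] assms(2) by metis
  have "mat_apply A v = scale_col (u * w) (col_eval (class_col rs'))"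
    by (simp add: u(2) w(2) mat_apply_scale_col)
  with u(1) w(1) show ?thesis
    unfolding col_class_def using units5_mult by blast
qed

lemma col_class_Rq:
  assumes "col_class v (r, s)"
  shows "col_class (mat_apply (Rq \<zeta>) v) (r + s, s)"
proof (rule col_class_mat_apply[OF assms col_eval_col_Rq])
  have "unit_related (col_Rq (class_col (r mod 5, s mod 5))) (class_col (r mod 5 + s mod 5, s mod 5))"
    by (rule list_all_mod_5[OF list_all_mod_5[OF class_col_Rq_check]])
  then show "unit_related (col_Rq (class_col (r, s))) (class_col (r + s, s))"
    by (simp add: class_col_def mod_add_eq)
qed

lemma col_class_Sq:
  assumes "col_class v (r, s)"
  shows "col_class (mat_apply (Sq \<zeta>) v) (- s, r)"
proof (rule col_class_mat_apply[OF assms col_eval_col_Sq])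
  have "unit_related (col_Sq (class_col (r mod 5, s mod 5))) (class_col (- (s mod 5), r mod 5))"
    by (rule list_all_mod_5[OF list_all_mod_5[OF class_col_Sq_check]])
  then show "unit_related (col_Sq (class_col (r, s))) (class_col (- s, r))"
    by (simp add: class_col_def mod_minus_eq)
qed

lemma col_class_Rq_iter:
  "col_class v (r, s) \<Longrightarrow> col_class ((mat_apply (Rq \<zeta>) ^^ n) v) (r + int n * s, s)"
  by (induction n) (auto dest: col_class_Rq simp: algebra_simps)

lemma col_class_Mq:
  "\<forall>c\<in>set cs. 0 \<le> c \<Longrightarrow> col_class (col1 (Mq \<zeta> cs)) (hj_fraction cs)"
proof (induction cs)
  case Nil
  have "col1 (Mq \<zeta> []) = col_eval (class_col (hj_fraction []))"
    by (simp add: col_eval_def class_col_def class_table_def)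
  then show ?case
    unfolding col_class_def using one_in_units5 by force
next
  case (Cons c cs)
  obtain r s where rs: "hj_fraction cs = (r, s)" by fastforce
  with Cons have "col_class (col1 (Mq \<zeta> cs)) (r, s)" by simp
  then have "col_class (col1 (Mq \<zeta> (c # cs))) (- s + int (nat c) * r, r)"
    unfolding col1_Mq_Cons by (intro col_class_Rq_iter col_class_Sq)
  with Cons.prems rs show ?case by (simp add: algebra_simps)
qed

lemma S_gt1_class:
  assumes "0 < s" and "s < r" and "coprime r s"
  obtains u where "u \<in> units5"
    and "S_gt1 \<zeta> (of_int r / of_int s) = u * cyc5_eval \<zeta> (snd (class_col (r, s)))"
proof -
  obtain cs where cs: "hj_admissible cs" "hj_fraction cs = (r, s)"
    using hj_fraction_surj[OF assms] by blast
  then have "S_gt1 \<zeta> (of_int r / of_int s) = snd (col1 (Mq \<zeta> cs))"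
    using hj_fraction_hj_val S_gt1_hj_val by metis
  moreover have "col_class (col1 (Mq \<zeta> cs)) (r, s)"
    using col_class_Mq[of cs] cs by (force simp: hj_admissible_def)
  ultimately show ?thesis
    using that by (auto simp: col_class_def scale_col_def col_eval_def)
qed

lemma S_rat_class:
  assumes "0 < s" and "coprime r s"
  obtains k u where "u \<in> units5"
    and "S_rat \<zeta> (of_int r / of_int s) = u * cyc5_eval \<zeta> (snd (class_col (r + k * s, s)))"
proof -
  define k where "k = 2 - r div s"
  have "r + k * s = r mod s + 2 * s"
    unfolding k_def by (simp add: algebra_simps minus_div_mult_eq_mod [symmetric])
  with assms(1) have "s < r + k * s"
    using pos_mod_sign[of s r] by linarith
  moreover have "coprime (r + k * s) s"
    using assms(2) by (simp add: coprime_iff_gcd_eq_1 gcd.commute[of _ s] add.commute[of r] gcd_add_mult)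
  ultimately show ?thesis
    using S_gt1_class[OF assms(1)] S_rat_of_int_fraction[OF assms(1)] that
    unfolding k_def by metis
qed

lemma class_col_snd:
  assumes "\<not> (5 dvd a \<and> 5 dvd b)"
  shows "if 5 dvd b \<and> (a mod 5 = 1 \<or> a mod 5 = 4)
         then cyc5_eval \<zeta> (snd (class_col (a, b))) = 0
         else \<exists>u\<in>units5. \<exists>t\<in>{1, 1 + \<zeta>, 1 - \<zeta>^2}. cyc5_eval \<zeta> (snd (class_col (a, b))) = u * t"
proof -
  have "(a mod 5, b mod 5) \<noteq> (0, 0)"
    using assms by auto
  with list_all_mod_5[OF list_all_mod_5[OF class_col_snd_check, of a], of b]
  have "if b mod 5 = 0 \<and> (a mod 5 = 1 \<or> a mod 5 = 4)
      then cyc5_eq (snd (class_col (a mod 5, b mod 5))) (Cyc5 0 0 0 0 0)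
      else \<exists>t\<in>set [Cyc5 1 0 0 0 0, Cyc5 1 1 0 0 0, Cyc5 1 0 (-1) 0 0]. \<exists>c\<in>set unit_codes.
              cyc5_eq (snd (class_col (a mod 5, b mod 5))) (cyc5_unit c t)"
    by (rule mp)
  then have check: "if 5 dvd b \<and> (a mod 5 = 1 \<or> a mod 5 = 4)
      then cyc5_eq (snd (class_col (a, b))) (Cyc5 0 0 0 0 0)
      else \<exists>t\<in>{Cyc5 1 0 0 0 0, Cyc5 1 1 0 0 0, Cyc5 1 0 (-1) 0 0}. \<exists>c\<in>set unit_codes.
              cyc5_eq (snd (class_col (a, b))) (cyc5_unit c t)"
    by (simp only: class_col_mod dvd_eq_mod_eq_0 set_simps)
  show ?thesis
  proof (cases "5 dvd b \<and> (a mod 5 = 1 \<or> a mod 5 = 4)")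
    case True
    with check show ?thesis
      using cyc5_eval_eq by fastforce
  next
    case False
    with check obtain t c where "c \<in> set unit_codes"
      and "t \<in> {Cyc5 1 0 0 0 0, Cyc5 1 1 0 0 0, Cyc5 1 0 (-1) 0 0}"
      and "cyc5_eq (snd (class_col (a, b))) (cyc5_unit c t)"
      by auto
    moreover obtain u where "u \<in> units5" "\<And>p. cyc5_eval \<zeta> (cyc5_unit c p) = u * cyc5_eval \<zeta> p"
      using cyc5_eval_unit[OF \<open>c \<in> set unit_codes\<close>] by blast
    ultimately show ?thesis
      using False by (auto dest!: cyc5_eval_eq)
  qed
qed

lemma units5_times_values_nonzero:
  assumes "u \<in> units5" and "t \<in> {1, 1 + \<zeta>, 1 - \<zeta>^2}"
  shows "u * t \<noteq> 0"
proof -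
  have "1 + \<zeta> \<noteq> 0"
  proof
    assume "1 + \<zeta> = 0"
    then have "\<zeta> = -1" by (simp add: add_eq_0_iff)
    with square_neq_1 show False by simp
  qed
  then show ?thesis
    using assms units5_nonzero square_neq_1 by auto
qed

(* R_\<zeta>^5 is the identity. *)
lemma fst_col1_Mq_5: "fst (col1 (Mq \<zeta> (5 # cs))) = - (\<zeta>^4) * snd (col1 (Mq \<zeta> cs))"
  by (simp add: fst_col1_Mq_Cons sum_lessThan_5 power5 inverse_eq del: Mq.simps)

lemma snd_col1_Mq_prefix_35:
  "snd (col1 (Mq \<zeta> (concat (replicate n [3, 5]) @ cs))) = (- (\<zeta>^4)) ^ n * snd (col1 (Mq \<zeta> cs))"
  by (induction n) (simp_all add: snd_col1_Mq_Cons fst_col1_Mq_5 del: Mq.simps)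

lemma units5_eq_power:
  assumes "u \<in> units5"
  obtains n where "u = (- (\<zeta>^4)) ^ Suc n"
proof -
  obtain \<sigma> j where u: "u = \<sigma> * \<zeta> ^ j" "\<sigma> \<in> {1, -1}" "j < (5::nat)"
    using assms unfolding units5_def by blast
  \<comment> \<open>\<open>4 m \<equiv> j (mod 5)\<close> and \<open>m\<close> is even iff \<open>\<sigma> = 1\<close>\<close>
  define m where "m = 24 * j + (if \<sigma> = 1 then 10 else 5)"
  have "4 * m = j + 5 * (19 * j + (if \<sigma> = 1 then 8 else 4))"
    unfolding m_def by simp
  then have "\<zeta> ^ (4 * m) = \<zeta> ^ j"
    by (simp only: power_add power_mult power5 power_one mult_1_right)
  moreover have "(-1) ^ m = \<sigma>"
    using u(2) unfolding m_def by auto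
  ultimately have "u = (- (\<zeta>^4)) ^ m"
    by (simp add: u(1) power_minus [of "\<zeta>^4"] power_mult [symmetric])
  moreover have "m = Suc (m - 1)"
    unfolding m_def by simp
  ultimately show ?thesis
    using that by metis
qed

lemma unit_multiple_in_S_rat_range:
  assumes "\<forall>c\<in>set cs. 2 \<le> c" and "u \<in> units5"
  shows "u * snd (col1 (Mq \<zeta> cs)) \<in> {S_rat \<zeta> x | x. x > 0}"
proof -
  obtain n where n: "u = (- (\<zeta>^4)) ^ Suc n"
    using units5_eq_power[OF assms(2)] .
  \<comment> \<open>the leading 3 makes \<open>\<lfloor>x\<rfloor> = 2\<close>, so \<open>S_rat\<close> does not shift \<open>x\<close>\<close>
  define ds where "ds = 5 # concat (replicate n [3, 5]) @ cs"
  have ds: "hj_admissible ds"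
    using assms(1) unfolding ds_def hj_admissible_def by auto
  then have "2 < hj_val (3 # ds)"
    using hj_val_Cons_bounds[of 3 ds] by (simp add: hj_admissible_Cons ds_def)
  moreover have "S_rat \<zeta> (hj_val (3 # ds)) = u * snd (col1 (Mq \<zeta> cs))"
    using S_rat_hj_val_3[OF ds] snd_col1_Mq_prefix_35[of "Suc n" cs] n
    by (simp add: ds_def del: Mq.simps)
  ultimately have "0 < hj_val (3 # ds) \<and> u * snd (col1 (Mq \<zeta> cs)) = S_rat \<zeta> (hj_val (3 # ds))"
    by simp
  then show ?thesis
    by blast
qed

lemma snd_col1_Mq_2: "snd (col1 (Mq \<zeta> [2])) = 1"
  by (simp add: snd_col1_Mq_Cons del: Mq.simps)

lemma snd_col1_Mq_22: "snd (col1 (Mq \<zeta> [2, 2])) = 1 + \<zeta>"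
  by (simp add: snd_col1_Mq_Cons fst_col1_Mq_Cons eval_nat_numeral del: Mq.simps)

lemma snd_col1_Mq_223: "snd (col1 (Mq \<zeta> [2, 2, 3])) = \<zeta>^2 * (1 - \<zeta>^2)"
proof -
  have "snd (col1 (Mq \<zeta> [2, 2, 3])) = (1 + \<zeta>) * (1 + \<zeta> + \<zeta>^2) - \<zeta>"
    using neq_0
    by (simp add: snd_col1_Mq_Cons fst_col1_Mq_Cons eval_nat_numeral field_simps
        del: Mq.simps)
  also have "\<dots> = \<zeta>^2 * (1 - \<zeta>^2) + (1 + \<zeta> + \<zeta>^2 + \<zeta>^3 + \<zeta>^4)"
    by (simp add: algebra_simps eval_nat_numeral)
  finally show ?thesis
    by (simp add: sum_powers)
qed

lemma S_rat_of_int_fraction_cases: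
  assumes "0 < s" and "coprime r s"
  shows "if 5 dvd s \<and> (r mod 5 = 1 \<or> r mod 5 = 4)
         then S_rat \<zeta> (of_int r / of_int s) = 0
         else S_rat \<zeta> (of_int r / of_int s) \<in> {c * t | c t. c \<in> units5 \<and> t \<in> {1, 1 + \<zeta>, 1 - \<zeta>^2}}"
proof -
  obtain k u where u: "u \<in> units5"
    and S: "S_rat \<zeta> (of_int r / of_int s) = u * cyc5_eval \<zeta> (snd (class_col (r + k * s, s)))"
    using S_rat_class[OF assms] .
  have "\<not> (5 dvd r + k * s \<and> 5 dvd s)"
  proof
    assume "5 dvd r + k * s \<and> 5 dvd s"
    then have "5 dvd r" "5 dvd s"
      by (auto simp: dvd_add_left_iff)
    with assms(2) show False
      using coprime_common_divisor[of r s 5] by simp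
  qed
  note col = class_col_snd[OF this]
  have mod_eq: "(r + k * s) mod 5 = r mod 5" if "5 dvd s"
  proof -
    from that obtain m where "s = 5 * m" ..
    then show ?thesis by (simp add: mult.left_commute[of k])
  qed
  then have cond: "5 dvd s \<and> ((r + k * s) mod 5 = 1 \<or> (r + k * s) mod 5 = 4) \<longleftrightarrow>
      5 dvd s \<and> (r mod 5 = 1 \<or> r mod 5 = 4)"
    by auto
  show ?thesis
  proof (cases "5 dvd s \<and> (r mod 5 = 1 \<or> r mod 5 = 4)")
    case True
    with col cond S show ?thesis by simp
  next
    case False
    with col cond obtain c t where "c \<in> units5" "t \<in> {1, 1 + \<zeta>, 1 - \<zeta>^2}"
      and "cyc5_eval \<zeta> (snd (class_col (r + k * s, s))) = c * t"
      by (metis (no_types, lifting))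
    moreover from this u have "u * c \<in> units5"
      by (simp add: units5_mult)
    ultimately show ?thesis
      unfolding if_not_P[OF False] S by (metis (mono_tags, lifting) mem_Collect_eq mult.assoc)
  qed
qed

theorem S_rat_range:
  "{S_rat \<zeta> x | x. x > 0} = {0} \<union> {c * t | c t. c \<in> units5 \<and> t \<in> {1, 1 + \<zeta>, 1 - \<zeta>^2}}"
  (is "?range = {0} \<union> ?values")
proof (intro equalityI subsetI)
  fix y
  assume "y \<in> ?range"
  then obtain x where y: "y = S_rat \<zeta> x" by blast
  obtain r s where "quotient_of x = (r, s)" by fastforce
  then have "x = of_int r / of_int s" "0 < s" "coprime r s"
    by (simp_all add: quotient_of_div quotient_of_denom_pos quotient_of_coprime)
  with S_rat_of_int_fraction_cases[of s r] y show "y \<in> {0} \<union> ?values"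
    by (metis (no_types, lifting) Un_iff singletonI)
next
  fix y
  assume "y \<in> {0} \<union> ?values"
  then consider "y = 0" | c where "c \<in> units5" "y = c * 1" | c where "c \<in> units5" "y = c * (1 + \<zeta>)"
    | c where "c \<in> units5" "y = c * (1 - \<zeta>^2)"
    by blast
  then show "y \<in> ?range"
  proof cases
    case 1
    then show ?thesis
      using unit_multiple_in_S_rat_range[of "[]" 1] one_in_units5 by simp
  next
    case 2
    then show ?thesis
      using unit_multiple_in_S_rat_range[of "[2]" c] by (simp add: snd_col1_Mq_2 del: Mq.simps)
  next
    case 3
    then show ?thesis
      using unit_multiple_in_S_rat_range[of "[2, 2]" c] by (simp add: snd_col1_Mq_22 del: Mq.simps)
  next
    case 4
    have "\<zeta>^3 * \<zeta>^2 = 1"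
      using power5 by (simp flip: power_add)
    then have "c * \<zeta>^3 * snd (col1 (Mq \<zeta> [2, 2, 3])) = y"
      unfolding snd_col1_Mq_223 4(2) by algebra
    moreover have "c * \<zeta>^3 \<in> units5"
      using 4 sign_power_in_units5[of 1 3] units5_mult by simp
    ultimately show ?thesis
      using unit_multiple_in_S_rat_range[of "[2, 2, 3]" "c * \<zeta>^3"] by simp
  qed
qed

theorem S_rat_eq_0_iff:
  assumes "0 < s" and "coprime r s"
  shows "S_rat \<zeta> (of_int r / of_int s) = 0 \<longleftrightarrow> 5 dvd s \<and> (r mod 5 = 1 \<or> r mod 5 = 4)"
proof (cases "5 dvd s \<and> (r mod 5 = 1 \<or> r mod 5 = 4)")
  case True
  with S_rat_of_int_fraction_cases[OF assms] show ?thesis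
    by simp
next
  case False
  then obtain c t where
    "c \<in> units5" "t \<in> {1, 1 + \<zeta>, 1 - \<zeta>^2}" "S_rat \<zeta> (of_int r / of_int s) = c * t"
    using S_rat_of_int_fraction_cases[OF assms] unfolding if_not_P[OF False] by blast
  with False show ?thesis
    using units5_times_values_nonzero by simp
qed

end

theorem corollary3p8:
  fixes \<zeta> :: complex
  assumes "\<zeta> ^ 5 = 1" and "\<forall>k\<in>{1..4::nat}. \<zeta> ^ k \<noteq> 1"
  shows "{S_rat \<zeta> x | x. x > 0} =
           {0} \<union> {c * t | c t. c \<in> {\<sigma> * \<zeta> ^ j | \<sigma> j. \<sigma> \<in> {1, -1} \<and> j < (5::nat)}
                          \<and> t \<in> {1, 1 + \<zeta>, 1 - \<zeta> ^ 2}}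
         \<and> (\<forall>r s :: nat. 0 < r \<and> 0 < s \<and> coprime r s \<longrightarrow>
           (S_rat \<zeta> (of_nat r / of_nat s) = 0 \<longleftrightarrow>
              5 dvd s \<and> (r mod 5 = 1 \<or> r mod 5 = 4)))"
proof -
  have "\<zeta> \<noteq> 1"
    using assms(2) by force
  with assms(1) interpret primitive_fifth_root \<zeta>
    by unfold_locales
  have "S_rat \<zeta> (of_nat r / of_nat s) = 0 \<longleftrightarrow> 5 dvd s \<and> (r mod 5 = 1 \<or> r mod 5 = 4)"
    if "0 < s" and "coprime r s" for r s :: nat
  proof -
    have "int r mod 5 = int (r mod 5)"
      by (simp add: zmod_int)
    moreover have "(5::int) dvd int s \<longleftrightarrow> 5 dvd s"
      by (metis int_dvd_int_iff of_nat_numeral)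
    ultimately show ?thesis
      using S_rat_eq_0_iff[of "int s" "int r"] that by auto
  qed
  then show ?thesis
    using S_rat_range unfolding units5_def by blast
qed

end
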